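(* For $[\mathfrak{p}]\in\mathfrak{F}_4''$ with $\mathfrak{p}=(p_1,p_2,p_3,p_4)$, put $\mathbb{X}_1=\mathbb{X}(p_1,p_2,p_3,p_4)$, $\mathbb{X}_2=\mathbb{X}(p_1,p_3,p_2,p_4)$ and $\mathbb{A}=\mathbb{A}(p_1,p_2,p_3)$. Then $\mathbb{A}\in(-\pi/2,\pi/2)$ and $$|\mathbb{X}_1+\mathbb{X}_2-1|^2=2\Re\left(\mathbb{X}_1\overline{\mathbb{X}_2}(1+e^{-2i\mathbb{A}})\right),$$ with $\mathbb{X}_1+\mathbb{X}_2-1\neq0$, $\Re(\mathbb{X}_1\overline{\mathbb{X}_2}e^{-i\mathbb{A}})>0$ and $\arg(\mathbb{X}_1/\mathbb{X}_2)\neq 2\mathbb{A}$. Moreover, the map $B_0:\mathfrak{F}_4''\to\mathfrak{V}_4$, $B_0([\mathfrak p])=(\mathbb{X}_1,\mathbb{X}_2,\mathbb{A})$, is well defined and bijective, where $\mathfrak{V}_4$ is the set of $(w_1,w_2,a)\in\mathbb{C}^2\times(-\pi/2,\pi/2)$ with $|w_1+w_2-1|^2=2\Re(w_1\overline{w_2}(1+e^{-2ia}))$, $w_1+w_2-1\neq0$, $\Re(w_1\overline{w_2}e^{-ia})>0$ and $\arg(w_1/w_2)\neq 2a$.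
   Context: Let $\mathbb{C}^{2,1}$ denote $\mathbb{C}^3$ with the Hermitian form $\langle \mathbf z,\mathbf w\rangle=z_1\overline{w_3}+z_2\overline{w_2}+z_3\overline{w_1}$. The boundary $\partial\mathbf{H}^2_\mathbb{C}$ is the set of complex lines of null vectors, identified with $(\mathbb{C}\times\mathbb{R})\cup\{\infty\}$, $(z,t)$ corresponding to the line of $(-|z|^2+it,\sqrt2 z,1)^T$ and $\infty$ to that of $(1,0,0)^T$; ${\rm PU}(2,1)$ acts on it. A $\mathbb{C}$-circle is the intersection of $\partial\mathbf{H}^2_\mathbb{C}$ with the projectivisation of a complex 2-dimensional subspace of signature $(1,1)$. Cartan's angular invariant: $\mathbb{A}(p_1,p_2,p_3)=\arg(-\langle\mathbf p_1,\mathbf p_2\rangle\langle\mathbf p_2,\mathbf p_3\rangle\langle\mathbf p_3,\mathbf p_1\rangle)\in[-\pi/2,\pi/2]$ for lifts $\mathbf p_i$. The Korányi–Reimann complex cross-ratio of four distinct points is $\mathbb{X}(p_1,p_2,p_3,p_4)=\frac{\langle\mathbf p_4,\mathbf p_2\rangle\langle\mathbf p_3,\mathbf p_1\rangle}{\langle\mathbf p_4,\mathbf p_1\rangle\langle\mathbf p_3,\mathbf p_2\rangle}$ (independent of lifts, ${\rm PU}(2,1)$-invariant). $\mathfrak{C}_4''$ is the set of ordered quadruples of pairwise distinct boundary points such that $p_1,p_2,p_3$ do not lie on a common $\mathbb{C}$-circle, $p_2,p_3,p_4$ do not lie on a common $\mathbb{C}$-circle, and $p_4$ is not in the orbit of $p_1$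 under the stabiliser of $p_2,p_3$ in ${\rm PU}(2,1)$; $\mathfrak{F}_4''=\mathfrak{C}_4''/{\rm PU}(2,1)$. *)

theory Defs
  imports "HOL-Analysis.Analysis"
begin

definition herm :: "complex^3 \<Rightarrow> complex^3 \<Rightarrow> complex" where
  "herm z w = z$1 * cnj (w$3) + z$2 * cnj (w$2) + z$3 * cnj (w$1)"

text \<open>Boundary points of complex hyperbolic plane, identified with
  (C x R) \<union> {infinity}: None is infinity, Some (z,t) is (z,t).\<close>

type_synonym bpt = "(complex \<times> real) option"

definition lift :: "bpt \<Rightarrow> complex^3" where
  "lift p = (case p of
      None \<Rightarrow> vector [1, 0, 0]
    | Some (z, t) \<Rightarrow> vector [- complex_of_real ((cmod z)\<^sup>2) + \<i> * complex_of_real t,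
                            complex_of_real (sqrt 2) * z, 1])"

text \<open>U(2,1): linear maps preserving the Hermitian form. PU(2,1) is its quotient
  by scalars, which acts on boundary points in the same way.\<close>

definition U21 :: "(complex^3^3) set" where
  "U21 = {A. \<forall>v w. herm (A *v v) (A *v w) = herm v w}"

definition maps_to :: "complex^3^3 \<Rightarrow> bpt \<Rightarrow> bpt \<Rightarrow> bool" where
  "maps_to A p q \<longleftrightarrow> (\<exists>c. c \<noteq> 0 \<and> A *v lift p = c *s lift q)"

type_synonym quad = "bpt \<times> bpt \<times> bpt \<times> bpt"

definition PU_equiv :: "quad \<Rightarrow> quad \<Rightarrow> bool" where
  "PU_equiv P Q \<longleftrightarrow> (case P of (p1, p2, p3, p4) \<Rightarrow> case Q of (q1, q2, q3, q4) \<Rightarrow>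
     (\<exists>A\<in>U21. maps_to A p1 q1 \<and> maps_to A p2 q2 \<and> maps_to A p3 q3 \<and> maps_to A p4 q4))"

text \<open>Three boundary points lie on a common C-circle: their lifts lie in a complex
  2-dimensional subspace of signature (1,1), i.e. one spanned by u, v with
  <u,u> > 0, <v,v> < 0, <u,v> = 0.\<close>

definition on_common_C_circle :: "bpt \<Rightarrow> bpt \<Rightarrow> bpt \<Rightarrow> bool" where
  "on_common_C_circle p q r \<longleftrightarrow>
     (\<exists>u v. Re (herm u u) > 0 \<and> Re (herm v v) < 0 \<and> herm u v = 0 \<and>
        (\<forall>x\<in>{p, q, r}. \<exists>a b. lift x = a *s u + b *s v))"

definition in_stab_orbit :: "bpt \<Rightarrow> bpt \<Rightarrow> bpt \<Rightarrow> bpt \<Rightarrow> bool" where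
  "in_stab_orbit p2 p3 p1 p4 \<longleftrightarrow>
     (\<exists>A\<in>U21. maps_to A p2 p2 \<and> maps_to A p3 p3 \<and> maps_to A p1 p4)"

definition C4pp :: "quad set" where
  "C4pp = {(p1, p2, p3, p4). distinct [p1, p2, p3, p4] \<and>
             \<not> on_common_C_circle p1 p2 p3 \<and> \<not> on_common_C_circle p2 p3 p4 \<and>
             \<not> in_stab_orbit p2 p3 p1 p4}"

definition PU_rel :: "(quad \<times> quad) set" where
  "PU_rel = {(P, Q). P \<in> C4pp \<and> Q \<in> C4pp \<and> PU_equiv P Q}"

definition F4pp :: "quad set set" where
  "F4pp = C4pp // PU_rel"

definition cartan :: "bpt \<Rightarrow> bpt \<Rightarrow> bpt \<Rightarrow> real" where
  "cartan p1 p2 p3 = Arg (- herm (lift p1) (lift p2) * herm (lift p2) (lift p3) * herm (lift p3) (lift p1))"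

definition crossratio :: "bpt \<Rightarrow> bpt \<Rightarrow> bpt \<Rightarrow> bpt \<Rightarrow> complex" where
  "crossratio p1 p2 p3 p4 =
     (herm (lift p4) (lift p2) * herm (lift p3) (lift p1)) /
     (herm (lift p4) (lift p1) * herm (lift p3) (lift p2))"

definition B0 :: "quad \<Rightarrow> complex \<times> complex \<times> real" where
  "B0 P = (case P of (p1, p2, p3, p4) \<Rightarrow>
     (crossratio p1 p2 p3 p4, crossratio p1 p3 p2 p4, cartan p1 p2 p3))"

definition V4 :: "(complex \<times> complex \<times> real) set" where
  "V4 = {(w1, w2, a). a \<in> {-pi/2<..<pi/2} \<and>
          (cmod (w1 + w2 - 1))\<^sup>2 = 2 * Re (w1 * cnj w2 * (1 + exp (- 2 * \<i> * complex_of_real a))) \<and>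
          w1 + w2 - 1 \<noteq> 0 \<and>
          Re (w1 * cnj w2 * exp (- \<i> * complex_of_real a)) > 0 \<and>
          Arg (w1 / w2) \<noteq> 2 * a}"

end

theory Submission
  imports Defs
begin

text \<open>For null vectors the Gram determinant identity reads
  \<open>2 Re (\<langle>u,v\<rangle>\<langle>v,w\<rangle>\<langle>w,u\<rangle>) = -|det(u,v,w)|\<^sup>2\<close>, and the determinant of three lifts
  vanishes exactly when the points lie on a common C-circle. So for a quadruple in C4'' the
  Cartan triple product \<open>w = -\<langle>p1,p2\<rangle>\<langle>p2,p3\<rangle>\<langle>p3,p1\<rangle>\<close> has positive real part.
  Expanding \<open>p4\<close> in the basis \<open>p1, p2, p3\<close> gives
  \<open>X1 + X2 - 1 = -det(p2,p3,p4) cnj (det(p1,p2,p3)) / (\<langle>p4,p1\<rangle>\<langle>p3,p2\<rangle>\<langle>p2,p3\<rangle>)\<close>, while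
  \<open>X1 cnj X2\<close> is a positive multiple of \<open>-w \<langle>p2,p3\<rangle>\<langle>p3,p4\<rangle>\<langle>p4,p2\<rangle>\<close>; applying the Gram identity
  to both triples yields the identity and the two inequalities. Moreover
  \<open>Arg (X1 / X2) = 2 A\<close> says precisely that \<open>p4\<close> lies in the stabiliser orbit of \<open>p1\<close>.

  Conversely, Cartan's invariant classifies triples not on a C-circle up to PU(2,1), and once
  the first three points are matched, the two cross-ratios fix the pairings of the fourth lift
  with a basis, hence the fourth point; so B0 is injective on classes. Every point of V4 is
  realised by a normal form with \<open>p2 = \<infinity>\<close> and \<open>p3 = 0\<close>.\<close>

lemma exp_minus_i_Arg:
  assumes "w \<noteq> 0"
  shows "exp (- \<i> * complex_of_real (Arg w)) = complex_of_real (cmod w) / w"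
proof -
  have "exp (- \<i> * complex_of_real (Arg w)) = inverse (exp (\<i> * complex_of_real (Arg w)))"
    by (simp add: exp_minus[symmetric])
  also have "exp (\<i> * complex_of_real (Arg w)) = w / complex_of_real (cmod w)"
    using Arg_eq[OF assms] assms by (simp add: field_simps)
  finally show ?thesis by simp
qed

lemma exp_minus_2i_Arg:
  assumes "w \<noteq> 0"
  shows "exp (- 2 * \<i> * complex_of_real (Arg w)) = cnj w / w"
proof -
  have "- 2 * \<i> * complex_of_real (Arg w) = (- \<i> * complex_of_real (Arg w)) + (- \<i> * complex_of_real (Arg w))"
    by simp
  hence "exp (- 2 * \<i> * complex_of_real (Arg w)) = exp (- \<i> * complex_of_real (Arg w)) ^ 2"
    by (simp only: exp_add power2_eq_square)
  also have "\<dots> = complex_of_real ((cmod w)\<^sup>2) / w\<^sup>2"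
    unfolding exp_minus_i_Arg[OF assms] by (simp add: power_divide)
  also have "\<dots> = cnj w / w"
    unfolding complex_norm_square using assms by (simp add: power2_eq_square)
  finally show ?thesis .
qed

lemma Arg_eq_iff_positive_multiple:
  assumes "z \<noteq> 0" "- pi < \<theta>" "\<theta> \<le> pi"
  shows "Arg z = \<theta> \<longleftrightarrow> (\<exists>r>0. z = complex_of_real r * exp (\<i> * complex_of_real \<theta>))"
proof
  assume "Arg z = \<theta>"
  thus "\<exists>r>0. z = complex_of_real r * exp (\<i> * complex_of_real \<theta>)"
    using Arg_eq[OF assms(1)] assms(1) by (metis zero_less_norm_iff)
qed (use Arg_unique assms in metis)

lemma positive_multiple_if_Arg_eq:
  assumes "a \<noteq> 0" "b \<noteq> 0" "Arg a = Arg b"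
  shows "\<exists>t>0. b = complex_of_real t * a"
proof (intro exI conjI)
  let ?e = "exp (\<i> * complex_of_real (Arg a))"
  have "complex_of_real (cmod b / cmod a) * a = complex_of_real (cmod b / cmod a) * (complex_of_real (cmod a) * ?e)"
    using Arg_eq[OF assms(1)] by simp
  also have "\<dots> = complex_of_real (cmod b) * ?e" using assms(1) by simp
  also have "\<dots> = b" using Arg_eq[OF assms(2)] assms(3) by simp
  finally show "b = complex_of_real (cmod b / cmod a) * a" ..
  show "cmod b / cmod a > 0" using assms by simp
qed

lemma bij_betw_quotient_the_elem:
  assumes "r \<subseteq> A \<times> A" and "\<And>x y. x \<in> A \<Longrightarrow> y \<in> A \<Longrightarrow> (x, y) \<in> r \<longleftrightarrow> f x = f y"
  shows "bij_betw (\<lambda>X. the_elem (f ` X)) (A // r) (f ` A)"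
proof -
  have class_eq: "r `` {x} = {y \<in> A. f y = f x}" if "x \<in> A" for x
    using assms that by auto
  have the_elem_class: "the_elem (f ` (r `` {x})) = f x" if "x \<in> A" for x
  proof -
    have "f ` (r `` {x}) = {f x}" unfolding class_eq[OF that] using that by auto
    thus ?thesis by simp
  qed
  show ?thesis
  proof (rule bij_betw_imageI)
    show "inj_on (\<lambda>X. the_elem (f ` X)) (A // r)"
    proof (rule inj_onI)
      fix X Y assume "X \<in> A // r" "Y \<in> A // r" and eq: "the_elem (f ` X) = the_elem (f ` Y)"
      then obtain x y where xy: "x \<in> A" "y \<in> A" and XY: "X = r `` {x}" "Y = r `` {y}"
        by (auto elim!: quotientE)
      hence "f x = f y" using eq the_elem_class by metis
      thus "X = Y" unfolding XY class_eq[OF xy(1)] class_eq[OF xy(2)] by simp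
    qed
    have "f x \<in> (\<lambda>X. the_elem (f ` X)) ` (A // r)" if "x \<in> A" for x
      using the_elem_class[OF that] quotientI[OF that] by (metis image_eqI)
    thus "(\<lambda>X. the_elem (f ` X)) ` (A // r) = f ` A"
      by (auto simp: quotient_def the_elem_class)
  qed
qed

section \<open>The Hermitian form and the determinant\<close>

definition det3 :: "complex^3 \<Rightarrow> complex^3 \<Rightarrow> complex^3 \<Rightarrow> complex" where
  "det3 u v w = u$1*(v$2*w$3 - v$3*w$2) - u$2*(v$1*w$3 - v$3*w$1) + u$3*(v$1*w$2 - v$2*w$1)"

lemma herm_swap: "herm y x = cnj (herm x y)"
  by (simp add: herm_def)

lemma herm_scale_left: "herm (a *s x) w = a * herm x w"
  by (simp add: herm_def algebra_simps)

lemma herm_scale_right: "herm w (a *s x) = cnj a * herm w x"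
  by (simp add: herm_def algebra_simps)

lemma herm_diff_left: "herm (x - y) w = herm x w - herm y w"
  by (simp add: herm_def algebra_simps)

lemma herm_lincomb3_left:
  "herm (a *s x + b *s y + c *s z) w = a * herm x w + b * herm y w + c * herm z w"
  by (simp add: herm_def algebra_simps)

lemma herm_lincomb2:
  "herm (a1 *s x1 + a2 *s x2) (b1 *s y1 + b2 *s y2) =
    a1 * cnj b1 * herm x1 y1 + a1 * cnj b2 * herm x1 y2 + a2 * cnj b1 * herm x2 y1 + a2 * cnj b2 * herm x2 y2"
  by (simp add: herm_def algebra_simps)

lemma herm_lincomb3:
  "herm (a1 *s x1 + a2 *s x2 + a3 *s x3) (b1 *s y1 + b2 *s y2 + b3 *s y3) =
    a1 * cnj b1 * herm x1 y1 + a1 * cnj b2 * herm x1 y2 + a1 * cnj b3 * herm x1 y3 +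
    a2 * cnj b1 * herm x2 y1 + a2 * cnj b2 * herm x2 y2 + a2 * cnj b3 * herm x2 y3 +
    a3 * cnj b1 * herm x3 y1 + a3 * cnj b2 * herm x3 y2 + a3 * cnj b3 * herm x3 y3"
  by (simp add: herm_def algebra_simps)

lemma gram_determinant:
  "herm u u * herm v v * herm w w + herm u v * herm v w * herm w u + herm u w * herm v u * herm w v
   - herm u u * herm v w * herm w v - herm v v * herm u w * herm w u - herm w w * herm u v * herm v u
   = - det3 u v w * cnj (det3 u v w)"
  by (simp add: herm_def det3_def) algebra

lemma null_gram_determinant:
  assumes "herm u u = 0" "herm v v = 0" "herm w w = 0"
  shows "herm u v * herm v w * herm w u + cnj (herm u v * herm v w * herm w u) = - det3 u v w * cnj (det3 u v w)"
proof -
  have "cnj (herm u v * herm v w * herm w u) = herm u w * herm v u * herm w v"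
    by (simp add: herm_def) algebra
  thus ?thesis using gram_determinant[of u v w] assms by simp
qed

lemma Re_null_triple_product:
  assumes "herm u u = 0" "herm v v = 0" "herm w w = 0"
  shows "2 * Re (herm u v * herm v w * herm w u) = - (cmod (det3 u v w))\<^sup>2"
proof -
  let ?t = "herm u v * herm v w * herm w u" and ?d = "det3 u v w"
  have "complex_of_real (2 * Re ?t) = ?t + cnj ?t" by (rule complex_add_cnj [symmetric])
  also have "\<dots> = - (?d * cnj ?d)" using null_gram_determinant[OF assms] by simp
  also have "\<dots> = complex_of_real (- (cmod ?d)\<^sup>2)" by (simp only: of_real_minus complex_norm_square)
  finally show ?thesis by (simp only: of_real_eq_iff)
qed

lemma cramer:
  "det3 v1 v2 v3 *s x = det3 x v2 v3 *s v1 + det3 v1 x v3 *s v2 + det3 v1 v2 x *s v3"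
  by (simp add: vec_eq_iff forall_3 det3_def) algebra

lemma cramer_coordinates:
  assumes "det3 v1 v2 v3 \<noteq> 0"
  shows "x = (det3 x v2 v3 / det3 v1 v2 v3) *s v1 + (det3 v1 x v3 / det3 v1 v2 v3) *s v2
           + (det3 v1 v2 x / det3 v1 v2 v3) *s v3"
proof -
  let ?d = "det3 v1 v2 v3"
  have "?d *s x = ?d *s ((det3 x v2 v3 / ?d) *s v1 + (det3 v1 x v3 / ?d) *s v2 + (det3 v1 v2 x / ?d) *s v3)"
    using assms by (simp add: cramer[of v1 v2 v3 x] vec_eq_iff algebra_simps)
  hence "(1 / ?d) *s (?d *s x) = (1 / ?d) *s (?d *s ((det3 x v2 v3 / ?d) *s v1 + (det3 v1 x v3 / ?d) *s v2 + (det3 v1 v2 x / ?d) *s v3))"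
    by simp
  thus ?thesis using assms by (simp add: vector_smult_assoc)
qed

lemma det3_repeat: "det3 x x z = 0" "det3 x z x = 0" "det3 z x x = 0"
  by (simp_all add: det3_def algebra_simps)

lemma det3_cycle: "det3 u v w = det3 v w u"
  by (simp add: det3_def) algebra

lemma det3_scale: "det3 (a *s u) (b *s v) (c *s w) = a * b * c * det3 u v w"
  by (simp add: det3_def) algebra

lemma det3_diff_right: "det3 a b (x - c *s y - d *s z) = det3 a b x - c * det3 a b y - d * det3 a b z"
  by (simp add: det3_def) algebra

lemma det3_span2: "det3 (a1 *s u + b1 *s v) (a2 *s u + b2 *s v) (a3 *s u + b3 *s v) = 0"
  by (simp add: det3_def) algebra

lemma herm_nondegenerate:
  assumes "det3 b1 b2 b3 \<noteq> 0" "herm x b1 = 0" "herm x b2 = 0" "herm x b3 = 0"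
  shows "x = 0"
proof -
  define y where "y = (vector [x$3, x$2, x$1] :: complex^3)"
  have "herm x y = 0"
    using cramer_coordinates[OF assms(1), of y] assms(2-4)
    by (metis add.right_neutral herm_swap herm_lincomb3_left complex_cnj_zero mult_zero_right)
  moreover have "herm x y = complex_of_real ((cmod (x$1))\<^sup>2 + (cmod (x$2))\<^sup>2 + (cmod (x$3))\<^sup>2)"
    unfolding y_def herm_def of_real_add complex_norm_square by simp
  ultimately have "complex_of_real ((cmod (x$1))\<^sup>2 + (cmod (x$2))\<^sup>2 + (cmod (x$3))\<^sup>2) = 0"
    by simp
  hence "(cmod (x$1))\<^sup>2 + (cmod (x$2))\<^sup>2 + (cmod (x$3))\<^sup>2 = 0"
    by (simp only: of_real_eq_0_iff)
  hence "x$1 = 0" "x$2 = 0" "x$3 = 0"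
    by (smt (verit) zero_less_power norm_le_zero_iff zero_le_power2)+
  thus ?thesis by (simp add: vec_eq_iff forall_3)
qed

text \<open>The linear map sending \<open>v1, v2, v3\<close> to \<open>w1, w2, w3\<close>, written via Cramer's rule.\<close>

definition basis_change :: "complex^3 \<Rightarrow> complex^3 \<Rightarrow> complex^3 \<Rightarrow> complex^3 \<Rightarrow> complex^3 \<Rightarrow> complex^3 \<Rightarrow> complex^3^3" where
  "basis_change v1 v2 v3 w1 w2 w3 = (\<chi> i j. (det3 (axis j 1) v2 v3 * w1$i + det3 v1 (axis j 1) v3 * w2$i
       + det3 v1 v2 (axis j 1) * w3$i) / det3 v1 v2 v3)"

lemma basis_change_apply:
  "basis_change v1 v2 v3 w1 w2 w3 *v x = (det3 x v2 v3 / det3 v1 v2 v3) *s w1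
     + (det3 v1 x v3 / det3 v1 v2 v3) *s w2 + (det3 v1 v2 x / det3 v1 v2 v3) *s w3"
  by (simp add: vec_eq_iff forall_3 basis_change_def matrix_vector_mult_def sum_3 axis_def det3_def
      add_divide_distrib diff_divide_distrib) algebra

lemma U21_of_equal_gram:
  assumes d: "det3 v1 v2 v3 \<noteq> 0"
    and g11: "herm w1 w1 = herm v1 v1" and g22: "herm w2 w2 = herm v2 v2" and g33: "herm w3 w3 = herm v3 v3"
    and g12: "herm w1 w2 = herm v1 v2" and g13: "herm w1 w3 = herm v1 v3" and g23: "herm w2 w3 = herm v2 v3"
  shows "\<exists>A\<in>U21. A *v v1 = w1 \<and> A *v v2 = w2 \<and> A *v v3 = w3"
proof -
  let ?A = "basis_change v1 v2 v3 w1 w2 w3"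
  have g21: "herm w2 w1 = herm v2 v1" and g31: "herm w3 w1 = herm v3 v1" and g32: "herm w3 w2 = herm v3 v2"
    using g12 g13 g23 herm_swap by metis+
  have "herm (?A *v x) (?A *v y) = herm x y" for x y
  proof -
    have "herm (?A *v x) (?A *v y) =
      herm ((det3 x v2 v3 / det3 v1 v2 v3) *s v1 + (det3 v1 x v3 / det3 v1 v2 v3) *s v2 + (det3 v1 v2 x / det3 v1 v2 v3) *s v3)
       ((det3 y v2 v3 / det3 v1 v2 v3) *s v1 + (det3 v1 y v3 / det3 v1 v2 v3) *s v2 + (det3 v1 v2 y / det3 v1 v2 v3) *s v3)"
      unfolding basis_change_apply herm_lincomb3 g11 g22 g33 g12 g13 g23 g21 g31 g32 ..
    also have "\<dots> = herm x y"
      using cramer_coordinates[OF d, of x, symmetric] cramer_coordinates[OF d, of y, symmetric] by simp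
    finally show ?thesis .
  qed
  hence "?A \<in> U21" by (simp add: U21_def)
  moreover have "?A *v v1 = w1" "?A *v v2 = w2" "?A *v v3 = w3"
    using d by (simp_all add: basis_change_apply det3_repeat)
  ultimately show ?thesis by blast
qed

section \<open>Lifts of boundary points and \<open>\<complex>\<close>-circles\<close>

lemma lift_None: "lift None = vector [1, 0, 0]"
  by (simp add: lift_def)

lemma lift_Some: "lift (Some (z, t)) =
    vector [- complex_of_real ((cmod z)\<^sup>2) + \<i> * complex_of_real t, complex_of_real (sqrt 2) * z, 1]"
  by (simp add: lift_def)

lemma lift_3: "lift p $ 3 = (if p = None then 0 else 1)"
  by (cases p) (auto simp: lift_None lift_Some)

lemma sqrt2_mult_cnj: "complex_of_real (sqrt 2) * z * cnj (complex_of_real (sqrt 2) * z') = 2 * (z * cnj z')"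
proof -
  have "complex_of_real (sqrt 2) * z * cnj (complex_of_real (sqrt 2) * z')
      = complex_of_real (sqrt 2 * sqrt 2) * (z * cnj z')"
    by (simp only: complex_cnj_mult complex_cnj_complex_of_real of_real_mult mult_ac)
  thus ?thesis by simp
qed

lemma herm_lift_Some:
  "herm (lift (Some (z, t))) (lift (Some (z', t'))) =
     - complex_of_real ((cmod z)\<^sup>2) - complex_of_real ((cmod z')\<^sup>2) + 2 * (z * cnj z') + \<i> * (t - t')"
proof -
  have "herm (lift (Some (z, t))) (lift (Some (z', t'))) =
      (- complex_of_real ((cmod z)\<^sup>2) + \<i> * complex_of_real t)
      + complex_of_real (sqrt 2) * z * cnj (complex_of_real (sqrt 2) * z')
      + cnj (- complex_of_real ((cmod z')\<^sup>2) + \<i> * complex_of_real t')"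
    unfolding herm_def lift_Some by simp
  thus ?thesis unfolding sqrt2_mult_cnj by (simp add: algebra_simps)
qed

lemma herm_lift_self: "herm (lift p) (lift p) = 0"
proof (cases p)
  case (Some a)
  then obtain z t where "p = Some (z, t)" by fastforce
  thus ?thesis by (simp add: herm_lift_Some complex_norm_square[symmetric])
qed (simp add: herm_def lift_None)

text \<open>For finite points the real part of the form is minus the squared horizontal distance and
  the imaginary part is the difference of heights.\<close>

lemma herm_lift_eq_0_iff: "herm (lift p) (lift q) = 0 \<longleftrightarrow> p = q"
proof
  assume h: "herm (lift p) (lift q) = 0"
  show "p = q"
  proof (cases p; cases q)
    fix a b assume p: "p = Some a" and q: "q = Some b"
    obtain z t z' t' where a: "a = (z, t)" and b: "b = (z', t')" by fastforce
    have "Re (herm (lift p) (lift q)) = - ((Re z - Re z')\<^sup>2 + (Im z - Im z')\<^sup>2)"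
      unfolding p q a b herm_lift_Some
      by (simp add: cmod_power2 del: norm_of_real) (simp add: power2_eq_square algebra_simps)
    moreover have "Re (herm (lift p) (lift q)) = 0" using h by simp
    ultimately have "(Re z - Re z')\<^sup>2 + (Im z - Im z')\<^sup>2 = 0" by linarith
    hence "Re z - Re z' = 0" "Im z - Im z' = 0" by (simp_all only: sum_power2_eq_zero_iff)
    hence z: "z = z'" by (simp add: complex_eq_iff)
    have "Im (herm (lift p) (lift q)) = t - t'"
      unfolding p q a b z herm_lift_Some by simp
    thus "p = q" using h z p q a b by simp
  qed (use h in \<open>auto simp: herm_def lift_None lift_3\<close>)
qed (simp add: herm_lift_self)

lemma null_vector_eq_scaled_lift:
  assumes "v \<noteq> 0" "herm v v = 0"
  shows "\<exists>p c. c \<noteq> 0 \<and> v = c *s lift p"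
proof (cases "v$3 = 0")
  case True
  have "herm v v = v$2 * cnj (v$2)" using True by (simp add: herm_def)
  hence "v$2 = 0" using assms(2) by simp
  hence "v = v$1 *s lift None" using True by (simp add: lift_None vec_eq_iff forall_3)
  moreover have "v$1 \<noteq> 0" using assms(1) True \<open>v$2 = 0\<close> by (auto simp: vec_eq_iff forall_3)
  ultimately show ?thesis by blast
next
  case False
  define q where "q = v$1 / v$3"
  have v1: "v$1 = q * v$3" using False by (simp add: q_def)
  have "0 = herm v v" using assms by simp
  also have "\<dots> = q * (v$3 * cnj (v$3)) + v$2 * cnj (v$2) + cnj q * (v$3 * cnj (v$3))"
    by (simp add: herm_def v1 algebra_simps)
  also have "\<dots> = complex_of_real (2 * Re q * (cmod (v$3))\<^sup>2 + (cmod (v$2))\<^sup>2)"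
    by (simp add: complex_norm_square[symmetric] complex_eq_iff algebra_simps)
  finally have re: "2 * Re q * (cmod (v$3))\<^sup>2 + (cmod (v$2))\<^sup>2 = 0"
    by (metis of_real_eq_0_iff)
  define z where "z = v$2 / (complex_of_real (sqrt 2) * v$3)"
  have "(cmod z)\<^sup>2 = (cmod (v$2))\<^sup>2 / (2 * (cmod (v$3))\<^sup>2)"
    by (simp add: z_def norm_divide norm_mult power_divide power_mult_distrib)
  also have "\<dots> = - Re q" using re False by (simp add: field_simps)
  finally have m: "(cmod z)\<^sup>2 = - Re q" .
  have "- complex_of_real (- Re q) + \<i> * complex_of_real (Im q) = q" by (simp add: complex_eq_iff)
  hence "v = v$3 *s lift (Some (z, Im q))"
    unfolding lift_Some m using False by (simp add: vec_eq_iff forall_3 v1 z_def)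
  thus ?thesis using False by blast
qed

lemma det3_lift_eq_0_if_on_common_C_circle:
  assumes "on_common_C_circle p q r"
  shows "det3 (lift p) (lift q) (lift r) = 0"
proof -
  from assms obtain u v where uv: "\<forall>x\<in>{p, q, r}. \<exists>a b. lift x = a *s u + b *s v"
    unfolding on_common_C_circle_def by blast
  then obtain a1 b1 a2 b2 a3 b3 where
    "lift p = a1 *s u + b1 *s v" "lift q = a2 *s u + b2 *s v" "lift r = a3 *s u + b3 *s v"
    by (meson insertCI)
  thus ?thesis by (simp add: det3_span2)
qed

lemma null_vector_orthogonal_to_lifts:
  assumes "herm y y = 0" "herm y (lift p) = 0" "herm y (lift q) = 0" "p \<noteq> q"
  shows "y = 0"
proof (rule ccontr)
  assume "y \<noteq> 0"
  then obtain s c where "c \<noteq> 0" "y = c *s lift s" using null_vector_eq_scaled_lift assms(1) by blast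
  hence "herm (lift s) (lift p) = 0" "herm (lift s) (lift q) = 0"
    using assms(2,3) by (simp_all add: herm_scale_left)
  thus False using assms(4) by (simp add: herm_lift_eq_0_iff)
qed

lemma lift_in_span_if_det3_eq_0:
  assumes pq: "p \<noteq> q" and d: "det3 (lift p) (lift q) (lift r) = 0"
  shows "\<exists>\<alpha> \<beta>. lift r = \<alpha> *s lift p + \<beta> *s lift q"
proof -
  define v1 v2 v3 where "v1 = lift p" and "v2 = lift q" and "v3 = lift r"
  have n1: "herm v1 v1 = 0" and n2: "herm v2 v2 = 0"
    by (simp_all add: v1_def v2_def herm_lift_self)
  have h12: "herm v1 v2 \<noteq> 0" and h21: "herm v2 v1 \<noteq> 0"
    using pq by (simp_all add: v1_def v2_def herm_lift_eq_0_iff)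
  define \<alpha> \<beta> where "\<alpha> = herm v3 v2 / herm v1 v2" and "\<beta> = herm v3 v1 / herm v2 v1"
  define y where "y = v3 - \<alpha> *s v1 - \<beta> *s v2"
  have y1: "herm y v1 = 0" and y2: "herm y v2 = 0"
    using h12 h21 by (simp_all add: y_def herm_diff_left herm_scale_left n1 n2 \<alpha>_def \<beta>_def)
  have "det3 v1 v2 y = 0"
    unfolding y_def det3_diff_right using d by (simp add: v1_def v2_def v3_def det3_repeat)
  hence "herm y y * herm v1 v2 * herm v2 v1 = 0"
    using gram_determinant[of v1 v2 y] herm_swap[of v1 y] herm_swap[of v2 y] by (simp add: n1 n2 y1 y2)
  hence "herm y y = 0" using h12 h21 by simp
  hence "y = 0" using null_vector_orthogonal_to_lifts y1 y2 pq by (simp add: v1_def v2_def)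
  hence "v3 = \<alpha> *s v1 + \<beta> *s v2" by (simp add: y_def vec_eq_iff algebra_simps)
  thus ?thesis unfolding v1_def v2_def v3_def by blast
qed

lemma signature_11_basis_of_null_pair:
  assumes n1: "herm v1 v1 = 0" and n2: "herm v2 v2 = 0" and c: "herm v1 v2 \<noteq> 0"
  obtains u v where "Re (herm u u) > 0" "Re (herm v v) < 0" "herm u v = 0"
    "v1 = (1/2) *s u + (1/2) *s v" "v2 = (1 / (2 * herm v1 v2)) *s u + (- 1 / (2 * herm v1 v2)) *s v"
proof
  let ?c = "herm v1 v2"
  define u v where "u = 1 *s v1 + ?c *s v2" and "v = 1 *s v1 + (- ?c) *s v2"
  have cc: "herm v2 v1 = cnj ?c" by (rule herm_swap)
  have "herm u u = 2 * (?c * cnj ?c)"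
    unfolding u_def herm_lincomb2 n1 n2 cc by (simp add: algebra_simps)
  hence "herm u u = complex_of_real (2 * (cmod ?c)\<^sup>2)"
    by (simp only: of_real_mult of_real_numeral complex_norm_square)
  thus "Re (herm u u) > 0" using c by simp
  have "herm v v = - 2 * (?c * cnj ?c)"
    unfolding v_def herm_lincomb2 n1 n2 cc by (simp add: algebra_simps)
  hence "herm v v = - complex_of_real (2 * (cmod ?c)\<^sup>2)"
    by (simp only: of_real_mult of_real_numeral complex_norm_square mult_minus_left)
  thus "Re (herm v v) < 0" using c by simp
  show "herm u v = 0"
    unfolding u_def v_def herm_lincomb2 n1 n2 cc by (simp add: algebra_simps)
  show "v1 = (1/2) *s u + (1/2) *s v"
    unfolding u_def v_def by (simp add: vec_eq_iff algebra_simps)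
  show "v2 = (1 / (2 * ?c)) *s u + (- 1 / (2 * ?c)) *s v"
    unfolding u_def v_def using c by (simp add: vec_eq_iff field_simps)
qed

lemma on_common_C_circle_iff_det3:
  assumes "p \<noteq> q"
  shows "on_common_C_circle p q r \<longleftrightarrow> det3 (lift p) (lift q) (lift r) = 0"
proof
  assume "det3 (lift p) (lift q) (lift r) = 0"
  then obtain \<alpha> \<beta> where r: "lift r = \<alpha> *s lift p + \<beta> *s lift q"
    using lift_in_span_if_det3_eq_0 assms by blast
  define c where "c = herm (lift p) (lift q)"
  have "c \<noteq> 0" using assms by (simp add: c_def herm_lift_eq_0_iff)
  then obtain u v where uv: "Re (herm u u) > 0" "Re (herm v v) < 0" "herm u v = 0"
      and p: "lift p = (1/2) *s u + (1/2) *s v"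
      and q: "lift q = (1 / (2 * c)) *s u + (- 1 / (2 * c)) *s v"
    using signature_11_basis_of_null_pair herm_lift_self unfolding c_def by metis
  have "lift r = (\<alpha> / 2 + \<beta> / (2 * c)) *s u + (\<alpha> / 2 - \<beta> / (2 * c)) *s v"
    unfolding r p q by (simp add: vec_eq_iff algebra_simps diff_divide_distrib)
  hence "\<forall>x\<in>{p, q, r}. \<exists>a b. lift x = a *s u + b *s v" using p q by blast
  thus "on_common_C_circle p q r" unfolding on_common_C_circle_def using uv by blast
qed (rule det3_lift_eq_0_if_on_common_C_circle)

lemma det3_lift_eq_0_iff:
  "det3 (lift p) (lift q) (lift r) = 0 \<longleftrightarrow>
     Re (herm (lift p) (lift q) * herm (lift q) (lift r) * herm (lift r) (lift p)) = 0"
  using Re_null_triple_product[OF herm_lift_self herm_lift_self herm_lift_self, of p q r] by auto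

section \<open>Invariants of a configuration\<close>

locale C4_config =
  fixes p1 p2 p3 p4 :: bpt
  assumes distinct: "distinct [p1, p2, p3, p4]"
    and det123: "det3 (lift p1) (lift p2) (lift p3) \<noteq> 0"
    and det234: "det3 (lift p2) (lift p3) (lift p4) \<noteq> 0"
begin

abbreviation "h12 \<equiv> herm (lift p1) (lift p2)"
abbreviation "h21 \<equiv> herm (lift p2) (lift p1)"
abbreviation "h13 \<equiv> herm (lift p1) (lift p3)"
abbreviation "h31 \<equiv> herm (lift p3) (lift p1)"
abbreviation "h14 \<equiv> herm (lift p1) (lift p4)"
abbreviation "h41 \<equiv> herm (lift p4) (lift p1)"
abbreviation "h23 \<equiv> herm (lift p2) (lift p3)"
abbreviation "h32 \<equiv> herm (lift p3) (lift p2)"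
abbreviation "h24 \<equiv> herm (lift p2) (lift p4)"
abbreviation "h42 \<equiv> herm (lift p4) (lift p2)"
abbreviation "h34 \<equiv> herm (lift p3) (lift p4)"
abbreviation "h43 \<equiv> herm (lift p4) (lift p3)"

lemma herm_nonzero:
  "h12 \<noteq> 0" "h21 \<noteq> 0" "h13 \<noteq> 0" "h31 \<noteq> 0" "h14 \<noteq> 0" "h41 \<noteq> 0"
  "h23 \<noteq> 0" "h32 \<noteq> 0" "h24 \<noteq> 0" "h42 \<noteq> 0" "h34 \<noteq> 0" "h43 \<noteq> 0"
  using distinct by (auto simp: herm_lift_eq_0_iff)

lemma herm_swapped:
  "h21 = cnj h12" "h31 = cnj h13" "h41 = cnj h14" "h32 = cnj h23" "h42 = cnj h24" "h43 = cnj h34"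
  by (rule herm_swap)+

lemma crossratio_1: "crossratio p1 p2 p3 p4 = h42 * h31 / (h41 * h32)"
  by (simp add: crossratio_def)

lemma crossratio_2: "crossratio p1 p3 p2 p4 = h43 * h21 / (h41 * h23)"
  by (simp add: crossratio_def)

abbreviation "triple \<equiv> - h12 * h23 * h31"

lemma cartan_eq_Arg: "cartan p1 p2 p3 = Arg triple"
  by (simp add: cartan_def)

lemma triple_nonzero: "triple \<noteq> 0"
  using herm_nonzero by simp

lemma Re_triple: "2 * Re triple = (cmod (det3 (lift p1) (lift p2) (lift p3)))\<^sup>2"
  using Re_null_triple_product[OF herm_lift_self herm_lift_self herm_lift_self, of p1 p2 p3] by simp

lemma cartan_bounds: "cartan p1 p2 p3 \<in> {-pi/2<..<pi/2}"
proof -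
  have "(cmod (det3 (lift p1) (lift p2) (lift p3)))\<^sup>2 > 0" using det123 by simp
  hence "Re triple > 0" using Re_triple by linarith
  thus ?thesis unfolding cartan_eq_Arg using Arg_Re_pos[of triple] by auto
qed

lemma herm_p4_coordinates:
  fixes d e
  defines "d \<equiv> det3 (lift p1) (lift p2) (lift p3)" and "e \<equiv> det3 (lift p2) (lift p3) (lift p4)"
  shows "d * h41 = det3 (lift p1) (lift p4) (lift p3) * h21 + det3 (lift p1) (lift p2) (lift p4) * h31"
    and "d * h42 = e * h12 + det3 (lift p1) (lift p2) (lift p4) * h32"
    and "d * h43 = e * h13 + det3 (lift p1) (lift p4) (lift p3) * h23"
proof -
  have cr: "d *s lift p4 = e *s lift p1 + det3 (lift p1) (lift p4) (lift p3) *s lift p2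
              + det3 (lift p1) (lift p2) (lift p4) *s lift p3"
    using cramer[of "lift p1" "lift p2" "lift p3" "lift p4"] det3_cycle[of "lift p4" "lift p2" "lift p3"]
    by (simp add: d_def e_def)
  have "d * herm (lift p4) x = e * herm (lift p1) x + det3 (lift p1) (lift p4) (lift p3) * herm (lift p2) x
          + det3 (lift p1) (lift p2) (lift p4) * herm (lift p3) x" for x
    using arg_cong[OF cr, of "\<lambda>y. herm y x"] by (simp add: herm_scale_left herm_lincomb3_left)
  from this[of "lift p1"] this[of "lift p2"] this[of "lift p3"]
  show "d * h41 = det3 (lift p1) (lift p4) (lift p3) * h21 + det3 (lift p1) (lift p2) (lift p4) * h31"
    and "d * h42 = e * h12 + det3 (lift p1) (lift p2) (lift p4) * h32"
    and "d * h43 = e * h13 + det3 (lift p1) (lift p4) (lift p3) * h23"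
    by (simp_all add: herm_lift_self)
qed

lemma crossratio_sum_minus_1:
  "crossratio p1 p2 p3 p4 + crossratio p1 p3 p2 p4 - 1 =
     - det3 (lift p2) (lift p3) (lift p4) * cnj (det3 (lift p1) (lift p2) (lift p3)) / (h41 * h32 * h23)"
proof -
  define d e where "d = det3 (lift p1) (lift p2) (lift p3)" and "e = det3 (lift p2) (lift p3) (lift p4)"
  have gram: "h12 * h23 * h31 + h21 * h32 * h13 = - d * cnj d"
    using null_gram_determinant[OF herm_lift_self herm_lift_self herm_lift_self, of p1 p2 p3]
    by (simp add: d_def herm_swapped)
  have "d * (h42 * h31 * h23 + h43 * h21 * h32 - h41 * h32 * h23)
      = (d * h42) * h31 * h23 + (d * h43) * h21 * h32 - (d * h41) * h32 * h23"
    by (simp add: algebra_simps)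
  also have "\<dots> = e * (h12 * h23 * h31 + h21 * h32 * h13)"
    unfolding herm_p4_coordinates[folded d_def e_def] by (simp add: algebra_simps)
  also have "\<dots> = d * (- e * cnj d)" unfolding gram by (simp add: algebra_simps)
  finally have "h42 * h31 * h23 + h43 * h21 * h32 - h41 * h32 * h23 = - e * cnj d"
    using det123 mult_left_cancel unfolding d_def by blast
  moreover have "h42 * h31 / (h41 * h32) + h43 * h21 / (h41 * h23) - 1
      = (h42 * h31 * h23 + h43 * h21 * h32 - h41 * h32 * h23) / (h41 * h32 * h23)"
    using herm_nonzero by (simp add: field_simps)
  ultimately show ?thesis unfolding crossratio_1 crossratio_2 d_def e_def by simp
qed

lemma crossratio_sum_ne_1: "crossratio p1 p2 p3 p4 + crossratio p1 p3 p2 p4 - 1 \<noteq> 0"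
  unfolding crossratio_sum_minus_1 using det123 det234 herm_nonzero by simp

lemma Re_triple_234: "Re (h23 * h34 * h42) = - (cmod (det3 (lift p2) (lift p3) (lift p4)))\<^sup>2 / 2"
  using Re_null_triple_product[OF herm_lift_self herm_lift_self herm_lift_self, of p2 p3 p4] by simp

text \<open>The norm identity and both inequalities are read off from this factorisation.\<close>

lemma crossratio_product:
  fixes R
  defines "R \<equiv> (cmod h14)\<^sup>2 * (cmod h23)\<^sup>2 * (cmod h23)\<^sup>2"
  shows "crossratio p1 p2 p3 p4 * cnj (crossratio p1 p3 p2 p4) = - triple * (h23 * h34 * h42) / complex_of_real R"
proof -
  have "complex_of_real R = (h41 * h14) * (h32 * h23) * (h32 * h23)"
    by (simp only: R_def of_real_mult complex_norm_square herm_swapped) (simp add: mult_ac)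
  thus ?thesis unfolding crossratio_1 crossratio_2
    using herm_nonzero by (simp add: herm_swapped field_simps)
qed

lemma crossratio_norm_identity:
  "(cmod (crossratio p1 p2 p3 p4 + crossratio p1 p3 p2 p4 - 1))\<^sup>2 =
     2 * Re (crossratio p1 p2 p3 p4 * cnj (crossratio p1 p3 p2 p4)
             * (1 + exp (- 2 * \<i> * complex_of_real (cartan p1 p2 p3))))"
proof -
  define d e t R where "d = det3 (lift p1) (lift p2) (lift p3)" and "e = det3 (lift p2) (lift p3) (lift p4)"
    and "t = h23 * h34 * h42" and "R = (cmod h14)\<^sup>2 * (cmod h23)\<^sup>2 * (cmod h23)\<^sup>2"
  have R: "R > 0" using herm_nonzero by (simp add: R_def)
  have Re_t: "Re t = - (cmod e)\<^sup>2 / 2"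
    unfolding t_def e_def by (rule Re_triple_234)
  have "1 + exp (- 2 * \<i> * complex_of_real (cartan p1 p2 p3)) = (triple + cnj triple) / triple"
    unfolding cartan_eq_Arg exp_minus_2i_Arg[OF triple_nonzero] using triple_nonzero by (simp add: field_simps)
  also have "\<dots> = complex_of_real ((cmod d)\<^sup>2) / triple"
    unfolding complex_add_cnj Re_triple[folded d_def] ..
  finally have "crossratio p1 p2 p3 p4 * cnj (crossratio p1 p3 p2 p4)
      * (1 + exp (- 2 * \<i> * complex_of_real (cartan p1 p2 p3))) = - complex_of_real ((cmod d)\<^sup>2 / R) * t"
    unfolding crossratio_product R_def[symmetric] t_def[symmetric] using triple_nonzero by simp
  hence "2 * Re (crossratio p1 p2 p3 p4 * cnj (crossratio p1 p3 p2 p4)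
      * (1 + exp (- 2 * \<i> * complex_of_real (cartan p1 p2 p3)))) = (cmod d)\<^sup>2 * (cmod e)\<^sup>2 / R"
    by (simp add: Re_t field_simps)
  moreover have "(cmod (crossratio p1 p2 p3 p4 + crossratio p1 p3 p2 p4 - 1))\<^sup>2 = (cmod d)\<^sup>2 * (cmod e)\<^sup>2 / R"
    unfolding crossratio_sum_minus_1 R_def d_def e_def herm_swapped
    by (simp add: norm_mult norm_divide power_divide power_mult_distrib)
  ultimately show ?thesis by simp
qed

lemma Re_crossratio_product_pos:
  "Re (crossratio p1 p2 p3 p4 * cnj (crossratio p1 p3 p2 p4) * exp (- \<i> * complex_of_real (cartan p1 p2 p3))) > 0"
proof -
  define e t R where "e = det3 (lift p2) (lift p3) (lift p4)"
    and "t = h23 * h34 * h42" and "R = (cmod h14)\<^sup>2 * (cmod h23)\<^sup>2 * (cmod h23)\<^sup>2"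
  have R: "R > 0" using herm_nonzero by (simp add: R_def)
  have Re_t: "Re t = - (cmod e)\<^sup>2 / 2"
    unfolding t_def e_def by (rule Re_triple_234)
  have "crossratio p1 p2 p3 p4 * cnj (crossratio p1 p3 p2 p4) * exp (- \<i> * complex_of_real (cartan p1 p2 p3))
      = - complex_of_real (cmod triple / R) * t"
    unfolding crossratio_product R_def[symmetric] t_def[symmetric] cartan_eq_Arg exp_minus_i_Arg[OF triple_nonzero]
    using triple_nonzero by simp
  hence "Re (crossratio p1 p2 p3 p4 * cnj (crossratio p1 p3 p2 p4) * exp (- \<i> * complex_of_real (cartan p1 p2 p3)))
      = cmod triple * (cmod e)\<^sup>2 / (2 * R)"
    by (simp add: Re_t field_simps)
  thus ?thesis using R triple_nonzero det234 by (simp add: e_def)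
qed

lemma crossratio_quotient:
  "crossratio p1 p2 p3 p4 / crossratio p1 p3 p2 p4 * exp (- 2 * \<i> * complex_of_real (cartan p1 p2 p3))
     = h42 * h13 / (h43 * h12)"
  unfolding crossratio_1 crossratio_2 cartan_eq_Arg exp_minus_2i_Arg[OF triple_nonzero]
  using herm_nonzero by (simp add: herm_swapped field_simps)

end

section \<open>The action of U(2,1)\<close>

lemma U21_herm: "A \<in> U21 \<Longrightarrow> herm (A *v x) (A *v y) = herm x y"
  by (simp add: U21_def)

lemma herm_of_images:
  assumes "A \<in> U21" "A *v x = c *s y" "A *v x' = c' *s y'" "c \<noteq> 0" "c' \<noteq> 0"
  shows "herm y y' = herm x x' / (c * cnj c')"
proof -
  have "herm x x' = c * cnj c' * herm y y'"
    using U21_herm[OF assms(1), of x x'] assms(2,3) by (simp add: herm_scale_left herm_scale_right mult_ac)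
  thus ?thesis using assms(4,5) by simp
qed

lemma maps_toE:
  assumes "maps_to A p q"
  obtains c where "c \<noteq> 0" "A *v lift p = c *s lift q"
  using assms unfolding maps_to_def by blast

text \<open>Under \<open>A\<close>, every \<open>herm (lift p\<^sub>i) (lift p\<^sub>j)\<close> is divided by \<open>c\<^sub>i cnj c\<^sub>j\<close>: the scalars cancel
  in the cross-ratios, and the triple product is divided by the positive number
  \<open>|c\<^sub>1 c\<^sub>2 c\<^sub>3|\<^sup>2\<close>.\<close>

lemma B0_invariant:
  assumes A: "A \<in> U21" and "maps_to A p1 q1" "maps_to A p2 q2" "maps_to A p3 q3" "maps_to A p4 q4"
  shows "B0 (p1, p2, p3, p4) = B0 (q1, q2, q3, q4)"
proof -
  obtain c1 c2 c3 c4 where c: "c1 \<noteq> 0" "c2 \<noteq> 0" "c3 \<noteq> 0" "c4 \<noteq> 0"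
    and m: "A *v lift p1 = c1 *s lift q1" "A *v lift p2 = c2 *s lift q2"
       "A *v lift p3 = c3 *s lift q3" "A *v lift p4 = c4 *s lift q4"
    using assms(2-5) by (metis maps_toE)
  note h = herm_of_images[OF A]
  note hh = h[OF m(1) m(2) c(1) c(2)] h[OF m(2) m(1) c(2) c(1)] h[OF m(1) m(3) c(1) c(3)]
    h[OF m(3) m(1) c(3) c(1)] h[OF m(2) m(3) c(2) c(3)] h[OF m(3) m(2) c(3) c(2)]
    h[OF m(4) m(1) c(4) c(1)] h[OF m(4) m(2) c(4) c(2)] h[OF m(4) m(3) c(4) c(3)]
  have cr1: "crossratio q1 q2 q3 q4 = crossratio p1 p2 p3 p4"
    and cr2: "crossratio q1 q3 q2 q4 = crossratio p1 p3 p2 p4"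
    unfolding crossratio_def hh using c by (simp_all add: field_simps)
  define R where "R = (cmod c1)\<^sup>2 * (cmod c2)\<^sup>2 * (cmod c3)\<^sup>2"
  have "R > 0" using c by (simp add: R_def)
  have "- herm (lift q1) (lift q2) * herm (lift q2) (lift q3) * herm (lift q3) (lift q1)
     = (- herm (lift p1) (lift p2) * herm (lift p2) (lift p3) * herm (lift p3) (lift p1))
       / ((c1 * cnj c1) * (c2 * cnj c2) * (c3 * cnj c3))"
    unfolding hh using c by (simp add: field_simps)
  also have "(c1 * cnj c1) * (c2 * cnj c2) * (c3 * cnj c3) = complex_of_real R"
    by (simp only: R_def of_real_mult complex_norm_square)
  finally have "cartan q1 q2 q3 = Arg ((- herm (lift p1) (lift p2) * herm (lift p2) (lift p3)
      * herm (lift p3) (lift p1)) / complex_of_real R)"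
    unfolding cartan_def by (rule arg_cong)
  hence "cartan q1 q2 q3 = cartan p1 p2 p3"
    unfolding cartan_def by (simp only: Arg_divide_of_real[OF \<open>R > 0\<close>])
  thus ?thesis using cr1 cr2 by (simp add: B0_def)
qed

context C4_config
begin

text \<open>An element fixing \<open>p2\<close> and \<open>p3\<close> acts on their lifts by scalars \<open>c\<^sub>2, c\<^sub>3\<close> with
  \<open>c\<^sub>2 cnj c\<^sub>3 = 1\<close>; what it can do to \<open>p1\<close> is then governed by the single positive number
  \<open>|c\<^sub>3|\<^sup>2\<close>.\<close>

lemma positive_ratio_if_in_stab_orbit:
  assumes "in_stab_orbit p2 p3 p1 p4"
  shows "\<exists>r>0. h42 * h13 = complex_of_real r * (h43 * h12)"
proof -
  obtain A where A: "A \<in> U21" "maps_to A p2 p2" "maps_to A p3 p3" "maps_to A p1 p4"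
    using assms unfolding in_stab_orbit_def by blast
  obtain c1 c2 c3 where c: "c1 \<noteq> 0" "c2 \<noteq> 0" "c3 \<noteq> 0"
    and m: "A *v lift p1 = c1 *s lift p4" "A *v lift p2 = c2 *s lift p2" "A *v lift p3 = c3 *s lift p3"
    using A(2-4) by (metis maps_toE)
  have "h23 = h23 / (c2 * cnj c3)"
    by (rule herm_of_images[OF A(1) m(2) m(3) c(2) c(3)])
  hence "c2 * cnj c3 = 1" using herm_nonzero c by (simp add: field_simps)
  hence cnj_c2: "cnj c2 = 1 / c3"
    using c by (metis complex_cnj_cnj complex_cnj_mult complex_cnj_one mult.commute nonzero_eq_divide_eq)
  have "h42 = h12 / (c1 * cnj c2)" and "h43 = h13 / (c1 * cnj c3)"
    by (rule herm_of_images[OF A(1) m(1) m(2) c(1) c(2)], rule herm_of_images[OF A(1) m(1) m(3) c(1) c(3)])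
  hence e42: "h42 = c3 * h12 / c1" and e13: "h13 = c1 * cnj c3 * h43"
    unfolding cnj_c2 using c herm_nonzero by (simp_all add: field_simps)
  have "h42 * h13 = complex_of_real ((cmod c3)\<^sup>2) * (h43 * h12)"
    unfolding e42 e13 complex_norm_square using c by (simp add: field_simps)
  moreover have "(cmod c3)\<^sup>2 > 0" using c by simp
  ultimately show ?thesis by blast
qed

lemma in_stab_orbit_if_positive_ratio:
  assumes r: "r > 0" and q: "h42 * h13 = complex_of_real r * (h43 * h12)"
  shows "in_stab_orbit p2 p3 p1 p4"
proof -
  define s where "s = complex_of_real (sqrt r)"
  have s: "s \<noteq> 0" "s * s = complex_of_real r" "cnj s = s"
    using r by (simp_all add: s_def of_real_mult[symmetric] del: of_real_mult)
  define c1 where "c1 = s * h12 / h42"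
  have "c1 \<noteq> 0" using s herm_nonzero by (simp add: c1_def)
  have "herm (c1 *s lift p4) (c1 *s lift p4) = herm (lift p1) (lift p1)"
    and "herm ((1 / s) *s lift p2) ((1 / s) *s lift p2) = herm (lift p2) (lift p2)"
    and "herm (s *s lift p3) (s *s lift p3) = herm (lift p3) (lift p3)"
    by (simp_all add: herm_scale_left herm_scale_right herm_lift_self)
  moreover have "herm (c1 *s lift p4) ((1 / s) *s lift p2) = h12"
    and "herm ((1 / s) *s lift p2) (s *s lift p3) = h23"
    using s herm_nonzero by (simp_all add: herm_scale_left herm_scale_right c1_def)
  moreover have "herm (c1 *s lift p4) (s *s lift p3) = h13"
  proof -
    have "herm (c1 *s lift p4) (s *s lift p3) = (s * s) * h12 * h43 / h42"
      by (simp add: herm_scale_left herm_scale_right c1_def s(3) field_simps)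
    also have "\<dots> = h13" using q herm_nonzero unfolding s(2) by (simp add: field_simps)
    finally show ?thesis .
  qed
  ultimately obtain A where "A \<in> U21" "A *v lift p1 = c1 *s lift p4"
      "A *v lift p2 = (1 / s) *s lift p2" "A *v lift p3 = s *s lift p3"
    using U21_of_equal_gram[OF det123] by metis
  thus ?thesis
    unfolding in_stab_orbit_def maps_to_def using s \<open>c1 \<noteq> 0\<close> by (metis divide_eq_0_iff one_neq_zero)
qed

lemma in_stab_orbit_iff:
  "in_stab_orbit p2 p3 p1 p4 \<longleftrightarrow> (\<exists>r>0. h42 * h13 = complex_of_real r * (h43 * h12))"
  using positive_ratio_if_in_stab_orbit in_stab_orbit_if_positive_ratio by blast

lemma Arg_crossratio_quotient_iff:
  "Arg (crossratio p1 p2 p3 p4 / crossratio p1 p3 p2 p4) = 2 * cartan p1 p2 p3 \<longleftrightarrow> in_stab_orbit p2 p3 p1 p4"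
proof -
  define X A where "X = crossratio p1 p2 p3 p4 / crossratio p1 p3 p2 p4" and "A = cartan p1 p2 p3"
  have "X \<noteq> 0" using herm_nonzero by (simp add: X_def crossratio_1 crossratio_2)
  have "- pi < 2 * A" "2 * A \<le> pi" using cartan_bounds by (auto simp: A_def)
  have unit: "exp (- 2 * \<i> * complex_of_real A) * exp (\<i> * complex_of_real (2 * A)) = 1"
    by (subst exp_add[symmetric]) simp
  have "X = X * (exp (- 2 * \<i> * complex_of_real A) * exp (\<i> * complex_of_real (2 * A)))"
    unfolding unit by simp
  also have "\<dots> = (X * exp (- 2 * \<i> * complex_of_real A)) * exp (\<i> * complex_of_real (2 * A))"
    by (rule mult.assoc[symmetric])
  also have "X * exp (- 2 * \<i> * complex_of_real A) = h42 * h13 / (h43 * h12)"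
    unfolding X_def A_def by (rule crossratio_quotient)
  finally have X: "X = h42 * h13 / (h43 * h12) * exp (\<i> * complex_of_real (2 * A))" .
  have "X = complex_of_real r * exp (\<i> * complex_of_real (2 * A)) \<longleftrightarrow> h42 * h13 / (h43 * h12) = complex_of_real r"
    for r unfolding X by (rule mult_right_cancel) simp
  also have "h42 * h13 / (h43 * h12) = complex_of_real r \<longleftrightarrow> h42 * h13 = complex_of_real r * (h43 * h12)" for r
    using herm_nonzero by (simp add: divide_eq_eq)
  finally have "(\<exists>r>0. X = complex_of_real r * exp (\<i> * complex_of_real (2 * A)))
      \<longleftrightarrow> (\<exists>r>0. h42 * h13 = complex_of_real r * (h43 * h12))" by simp
  thus ?thesis
    using Arg_eq_iff_positive_multiple[OF \<open>X \<noteq> 0\<close> \<open>- pi < 2 * A\<close> \<open>2 * A \<le> pi\<close>] in_stab_orbit_iff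
    by (simp add: X_def A_def)
qed

end

lemma C4pp_iff:
  "(p1, p2, p3, p4) \<in> C4pp \<longleftrightarrow> C4_config p1 p2 p3 p4 \<and> \<not> in_stab_orbit p2 p3 p1 p4"
  unfolding C4pp_def C4_config_def using on_common_C_circle_iff_det3 by auto

section \<open>Configurations with equal invariants\<close>

lemma real_rescaling_of_triple:
  fixes h12 h23 h13 k12 k23 k13 :: complex
  assumes t: "t > 0" "k12 * k23 * cnj k13 = complex_of_real t * (h12 * h23 * cnj h13)"
    and nz: "h13 \<noteq> 0" "k13 \<noteq> 0"
  shows "\<exists>\<rho>>0. complex_of_real \<rho> * complex_of_real \<rho> * (k12 * k23 * h13) = h12 * h23 * k13"
proof (intro exI conjI)
  define \<rho> where "\<rho> = cmod k13 / (sqrt t * cmod h13)"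
  show "\<rho> > 0" using t nz by (simp add: \<rho>_def)
  have "\<rho> * \<rho> = (cmod k13)\<^sup>2 / (t * (cmod h13)\<^sup>2)"
    using t by (simp add: \<rho>_def field_simps power2_eq_square)
  hence "complex_of_real \<rho> * complex_of_real \<rho>
      = complex_of_real ((cmod k13)\<^sup>2) / (complex_of_real t * complex_of_real ((cmod h13)\<^sup>2))"
    unfolding of_real_mult[symmetric] by (simp only: of_real_divide of_real_mult)
  hence rr: "complex_of_real \<rho> * complex_of_real \<rho> = k13 * cnj k13 / (complex_of_real t * (h13 * cnj h13))"
    unfolding complex_norm_square .
  have "complex_of_real \<rho> * complex_of_real \<rho> * (k12 * k23 * h13)
      = k13 * (k12 * k23 * cnj k13) / (complex_of_real t * cnj h13)"
    unfolding rr using nz by (simp add: field_simps)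
  also have "\<dots> = h12 * h23 * k13"
    unfolding t(2) using t(1) nz by (simp add: field_simps)
  finally show "complex_of_real \<rho> * complex_of_real \<rho> * (k12 * k23 * h13) = h12 * h23 * k13" .
qed

text \<open>Cartan's invariant classifies triples of boundary points not on a common \<open>\<complex>\<close>-circle:
  after rescaling the lifts of the \<open>q\<^sub>i\<close> the two Gram matrices agree. The middle scalar is real,
  and equality of the invariants makes the required value of its square positive.\<close>

lemma U21_map_if_cartan_eq:
  assumes p: "distinct [p1, p2, p3]" "det3 (lift p1) (lift p2) (lift p3) \<noteq> 0"
    and q: "distinct [q1, q2, q3]"
    and cartan: "cartan p1 p2 p3 = cartan q1 q2 q3"
  shows "\<exists>A\<in>U21. \<exists>c1 c2 c3. c1 \<noteq> 0 \<and> c2 \<noteq> 0 \<and> c3 \<noteq> 0 \<and>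
           A *v lift p1 = c1 *s lift q1 \<and> A *v lift p2 = c2 *s lift q2 \<and> A *v lift p3 = c3 *s lift q3"
proof -
  define h12 h23 h13 where "h12 = herm (lift p1) (lift p2)" and "h23 = herm (lift p2) (lift p3)"
    and "h13 = herm (lift p1) (lift p3)"
  define k12 k23 k13 where "k12 = herm (lift q1) (lift q2)" and "k23 = herm (lift q2) (lift q3)"
    and "k13 = herm (lift q1) (lift q3)"
  have nz: "h12 \<noteq> 0" "h23 \<noteq> 0" "h13 \<noteq> 0" "k12 \<noteq> 0" "k23 \<noteq> 0" "k13 \<noteq> 0"
    using p q by (auto simp: h12_def h23_def h13_def k12_def k23_def k13_def herm_lift_eq_0_iff)
  have "- k12 * k23 * cnj k13 \<noteq> 0" "- h12 * h23 * cnj h13 \<noteq> 0" using nz by simp_all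
  moreover have "Arg (- h12 * h23 * cnj h13) = Arg (- k12 * k23 * cnj k13)"
    using cartan by (simp add: cartan_def h12_def h23_def h13_def k12_def k23_def k13_def herm_swap[of "lift p3"]
        herm_swap[of "lift q3"])
  ultimately obtain t where t: "t > 0" "- k12 * k23 * cnj k13 = complex_of_real t * (- h12 * h23 * cnj h13)"
    using positive_multiple_if_Arg_eq by metis
  have "k12 * k23 * cnj k13 = complex_of_real t * (h12 * h23 * cnj h13)" using t(2) by simp
  then obtain \<rho> where "\<rho> > 0" and key: "complex_of_real \<rho> * complex_of_real \<rho> * (k12 * k23 * h13) = h12 * h23 * k13"
    using real_rescaling_of_triple t(1) nz by blast
  define r where "r = complex_of_real \<rho>"
  have r: "r \<noteq> 0" "cnj r = r" using \<open>\<rho> > 0\<close> by (simp_all add: r_def)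
  define c1 c3 where "c1 = h12 / (r * k12)" and "c3 = cnj (h23 / (r * k23))"
  have c: "c1 \<noteq> 0" "c3 \<noteq> 0" using r nz by (simp_all add: c1_def c3_def)
  have "herm (c1 *s lift q1) (r *s lift q2) = h12" "herm (r *s lift q2) (c3 *s lift q3) = h23"
    "herm (c1 *s lift q1) (c3 *s lift q3) = h13"
    using r nz key[folded r_def] by (simp_all add: herm_scale_left herm_scale_right c1_def c3_def
        k12_def[symmetric] k23_def[symmetric] k13_def[symmetric] field_simps)
  moreover have "herm (c1 *s lift q1) (c1 *s lift q1) = herm (lift p1) (lift p1)"
    "herm (r *s lift q2) (r *s lift q2) = herm (lift p2) (lift p2)"
    "herm (c3 *s lift q3) (c3 *s lift q3) = herm (lift p3) (lift p3)"
    by (simp_all add: herm_scale_left herm_scale_right herm_lift_self)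
  ultimately obtain A where "A \<in> U21" "A *v lift p1 = c1 *s lift q1" "A *v lift p2 = r *s lift q2"
      "A *v lift p3 = c3 *s lift q3"
    using U21_of_equal_gram[OF p(2)] unfolding h12_def h23_def h13_def by metis
  thus ?thesis using c r by blast
qed

text \<open>A map matching the first three points of two configurations with the same cross-ratios
  also matches the fourth: the image of \<open>lift p4\<close> and the rescaled \<open>lift q4\<close> have the same
  pairings with a basis, and the form is nondegenerate.\<close>

lemma PU_equiv_if_B0_eq:
  assumes "C4_config p1 p2 p3 p4" "C4_config q1 q2 q3 q4"
    and eq: "B0 (p1, p2, p3, p4) = B0 (q1, q2, q3, q4)"
  shows "\<exists>A\<in>U21. maps_to A p1 q1 \<and> maps_to A p2 q2 \<and> maps_to A p3 q3 \<and> maps_to A p4 q4"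
proof -
  interpret P: C4_config p1 p2 p3 p4 by fact
  interpret Q: C4_config q1 q2 q3 q4 by fact
  have X1: "P.h42 * P.h31 / (P.h41 * P.h32) = Q.h42 * Q.h31 / (Q.h41 * Q.h32)"
    and X2: "P.h43 * P.h21 / (P.h41 * P.h23) = Q.h43 * Q.h21 / (Q.h41 * Q.h23)"
    and cartan: "cartan p1 p2 p3 = cartan q1 q2 q3"
    using eq by (simp_all add: B0_def P.crossratio_1 P.crossratio_2 Q.crossratio_1 Q.crossratio_2)
  obtain A c1 c2 c3 where A: "A \<in> U21" and c: "c1 \<noteq> 0" "c2 \<noteq> 0" "c3 \<noteq> 0"
    and m: "A *v lift p1 = c1 *s lift q1" "A *v lift p2 = c2 *s lift q2" "A *v lift p3 = c3 *s lift q3"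
    using U21_map_if_cartan_eq[OF _ P.det123 _ cartan] P.distinct Q.distinct by auto
  have gram: "P.h21 = c2 * cnj c1 * Q.h21" "P.h23 = c2 * cnj c3 * Q.h23"
    "P.h31 = c3 * cnj c1 * Q.h31" "P.h32 = c3 * cnj c2 * Q.h32"
    using U21_herm[OF A] m by (metis herm_scale_left herm_scale_right mult.assoc)+
  define c4 where "c4 = P.h41 / (cnj c1 * Q.h41)"
  have "c4 \<noteq> 0" using c P.herm_nonzero Q.herm_nonzero by (simp add: c4_def)
  have "herm (c4 *s lift q4) (c1 *s lift q1) = P.h41"
    using c Q.herm_nonzero by (simp add: herm_scale_left herm_scale_right c4_def)
  moreover have "herm (c4 *s lift q4) (c2 *s lift q2) = P.h42"
    using X1 c P.herm_nonzero Q.herm_nonzero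
    by (simp add: herm_scale_left herm_scale_right c4_def gram field_simps)
  moreover have "herm (c4 *s lift q4) (c3 *s lift q3) = P.h43"
    using X2 c P.herm_nonzero Q.herm_nonzero
    by (simp add: herm_scale_left herm_scale_right c4_def gram field_simps)
  moreover have "herm (A *v lift p4) (c1 *s lift q1) = P.h41"
    "herm (A *v lift p4) (c2 *s lift q2) = P.h42" "herm (A *v lift p4) (c3 *s lift q3) = P.h43"
    using U21_herm[OF A, of "lift p4"] by (simp_all flip: m)
  ultimately have "herm (A *v lift p4 - c4 *s lift q4) (c1 *s lift q1) = 0"
      "herm (A *v lift p4 - c4 *s lift q4) (c2 *s lift q2) = 0"
      "herm (A *v lift p4 - c4 *s lift q4) (c3 *s lift q3) = 0"
    by (simp_all add: herm_diff_left)
  moreover have "det3 (c1 *s lift q1) (c2 *s lift q2) (c3 *s lift q3) \<noteq> 0"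
    using Q.det123 c by (simp add: det3_scale)
  ultimately have "A *v lift p4 = c4 *s lift q4"
    using herm_nondegenerate by (metis eq_iff_diff_eq_0)
  thus ?thesis
    unfolding maps_to_def using A m c \<open>c4 \<noteq> 0\<close> by blast
qed

section \<open>A normal form\<close>

text \<open>A representative with prescribed invariants: \<open>p2 = \<infinity>\<close>, \<open>p3 = 0\<close>, \<open>p1\<close> chosen so that
  \<open>\<langle>p1, p2\<rangle> = \<langle>p2, p3\<rangle> = 1\<close> and \<open>\<langle>p3, p1\<rangle> = -e\<^sup>i\<^sup>a\<close>, and \<open>p4\<close> so that
  \<open>\<langle>p4, p2\<rangle> = 1\<close>, \<open>\<langle>p4, p1\<rangle> = D\<close>, \<open>\<langle>p4, p3\<rangle> = w2 D\<close> with \<open>D = -e\<^sup>i\<^sup>a / w1\<close>.\<close>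

definition normal_quad :: "complex \<Rightarrow> complex \<Rightarrow> real \<Rightarrow> quad" where
  "normal_quad w1 w2 a =
     (let E = exp (\<i> * complex_of_real a); D = - E / w1; s = complex_of_real (sqrt (cos a))
      in (Some (s, sin a), None, Some (0, 0), Some ((D - w2 * D + E) / (2 * s), Im (w2 * D))))"

text \<open>The defining equation of \<open>V4\<close> is exactly what makes the height of \<open>p4\<close> consistent,
  i.e. makes \<open>lift p4\<close> null.\<close>

lemma V4_normal_height:
  assumes V: "(w1, w2, a) \<in> V4"
  defines "E \<equiv> exp (\<i> * complex_of_real a)" and "s \<equiv> complex_of_real (sqrt (cos a))"
  defines "D \<equiv> - E / w1"
  shows "(cmod ((D - w2 * D + E) / (2 * s)))\<^sup>2 = - Re (w2 * D)"
proof -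
  have a: "a \<in> {-pi/2<..<pi/2}"
    and eqV: "(cmod (w1 + w2 - 1))\<^sup>2 = 2 * Re (w1 * cnj w2 * (1 + exp (- 2 * \<i> * complex_of_real a)))"
    and "Re (w1 * cnj w2 * exp (- \<i> * complex_of_real a)) > 0"
    using V unfolding V4_def by auto
  hence "w1 \<noteq> 0" by auto
  have c: "cos a > 0" using a by (auto intro!: cos_gt_zero_pi)
  have E: "cnj E = exp (- \<i> * complex_of_real a)" "E * cnj E = 1" "E + cnj E = complex_of_real (2 * cos a)"
    by (simp_all add: E_def exp_cnj complex_eq_iff Re_exp Im_exp cos_squared_eq power2_eq_square flip: exp_add)
  have "E \<noteq> 0" "D \<noteq> 0" using \<open>w1 \<noteq> 0\<close> by (simp_all add: E_def D_def)
  have w1: "w1 = - E / D" using \<open>w1 \<noteq> 0\<close> \<open>E \<noteq> 0\<close> by (simp add: D_def)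
  have "exp (- 2 * \<i> * complex_of_real a) = cnj E * cnj E"
    unfolding E(1) by (simp add: algebra_simps flip: exp_add)
  hence "w1 * cnj w2 * (1 + exp (- 2 * \<i> * complex_of_real a)) = - cnj w2 * (E + (E * cnj E) * cnj E) / D"
    unfolding w1 using \<open>D \<noteq> 0\<close> by (simp add: field_simps)
  also have "\<dots> = - complex_of_real (2 * cos a) * cnj (w2 * D) / (D * cnj D)"
    unfolding E(2) E(3) mult_1_left using \<open>D \<noteq> 0\<close> by (simp add: field_simps)
  also have "\<dots> = - complex_of_real (2 * cos a / (cmod D)\<^sup>2) * cnj (w2 * D)"
    unfolding complex_norm_square[symmetric] by simp
  finally have Re_rhs: "2 * Re (w1 * cnj w2 * (1 + exp (- 2 * \<i> * complex_of_real a)))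
      = - 4 * cos a * Re (w2 * D) / (cmod D)\<^sup>2"
    by simp
  have lhs: "(cmod (w1 + w2 - 1))\<^sup>2 = 4 * cos a * (cmod ((D - w2 * D + E) / (2 * s)))\<^sup>2 / (cmod D)\<^sup>2"
  proof -
    have "w1 + w2 - 1 = - (D - w2 * D + E) / D"
      unfolding w1 using \<open>D \<noteq> 0\<close> by (simp add: field_simps)
    hence "(cmod (w1 + w2 - 1))\<^sup>2 = (cmod (D - w2 * D + E))\<^sup>2 / (cmod D)\<^sup>2"
      by (simp only: norm_divide norm_minus_cancel power_divide)
    moreover have "(cmod ((D - w2 * D + E) / (2 * s)))\<^sup>2 = (cmod (D - w2 * D + E))\<^sup>2 / (4 * cos a)"
      using c by (simp add: s_def norm_divide norm_mult power_divide power_mult_distrib)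
    ultimately show ?thesis using c by simp
  qed
  define Z R where "Z = (cmod ((D - w2 * D + E) / (2 * s)))\<^sup>2" and "R = Re (w2 * D)"
  have "4 * cos a * Z = 4 * cos a * (- R)"
    using eqV[unfolded lhs Re_rhs, folded Z_def R_def] \<open>D \<noteq> 0\<close> by (simp add: divide_simps)
  thus ?thesis using c by (simp add: Z_def R_def)
qed

lemma normal_quad_pairings:
  assumes V: "(w1, w2, a) \<in> V4" and P: "normal_quad w1 w2 a = (p1, p2, p3, p4)"
  shows "herm (lift p1) (lift p2) = 1" "herm (lift p2) (lift p3) = 1"
    "herm (lift p3) (lift p1) = - exp (\<i> * complex_of_real a)"
    "herm (lift p4) (lift p1) = - exp (\<i> * complex_of_real a) / w1"
    "herm (lift p4) (lift p2) = 1"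
    "herm (lift p4) (lift p3) = - w2 * exp (\<i> * complex_of_real a) / w1"
proof -
  define E s where "E = exp (\<i> * complex_of_real a)" and "s = complex_of_real (sqrt (cos a))"
  define D where "D = - E / w1"
  define z where "z = (D - w2 * D + E) / (2 * s)"
  have p: "p1 = Some (s, sin a)" "p2 = None" "p3 = Some (0, 0)" "p4 = Some (z, Im (w2 * D))"
    using P unfolding normal_quad_def Let_def E_def[symmetric] s_def[symmetric] D_def[symmetric]
      z_def[symmetric] by auto
  have "a \<in> {-pi/2<..<pi/2}" using V by (simp add: V4_def)
  hence "cos a > 0" by (auto intro!: cos_gt_zero_pi)
  hence "s * s = complex_of_real (cos a)" by (simp add: s_def flip: of_real_mult)
  hence "- complex_of_real ((cmod s)\<^sup>2) + \<i> * complex_of_real (sin a) = - cnj E"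
    by (simp add: E_def complex_eq_iff Re_exp Im_exp s_def \<open>cos a > 0\<close>)
  hence l1: "lift p1 = vector [- cnj E, complex_of_real (sqrt 2) * s, 1]"
    unfolding p lift_Some by simp
  have "- complex_of_real ((cmod z)\<^sup>2) + \<i> * complex_of_real (Im (w2 * D)) = w2 * D"
    unfolding z_def s_def E_def D_def V4_normal_height[OF V] by (simp add: complex_eq_iff)
  hence l4: "lift p4 = vector [w2 * D, complex_of_real (sqrt 2) * z, 1]"
    unfolding p lift_Some by simp
  have l2: "lift p2 = vector [1, 0, 0]" and l3: "lift p3 = vector [0, 0, 1]"
    unfolding p by (simp_all add: lift_None lift_Some)
  show "herm (lift p1) (lift p2) = 1" "herm (lift p2) (lift p3) = 1" "herm (lift p4) (lift p2) = 1"
    "herm (lift p3) (lift p1) = - exp (\<i> * complex_of_real a)"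
    "herm (lift p4) (lift p3) = - w2 * exp (\<i> * complex_of_real a) / w1"
    unfolding l1 l2 l3 l4 by (simp_all add: herm_def E_def D_def)
  have "herm (lift p4) (lift p1) = w2 * D + 2 * (z * cnj s) - E"
    unfolding l1 l4 herm_def using sqrt2_mult_cnj[of z s] by (simp add: mult_ac)
  also have "\<dots> = D" using \<open>cos a > 0\<close> by (simp add: z_def s_def field_simps)
  finally show "herm (lift p4) (lift p1) = - exp (\<i> * complex_of_real a) / w1"
    by (simp add: D_def E_def)
qed

lemma normal_quad_realises:
  assumes V: "(w1, w2, a) \<in> V4"
  shows "normal_quad w1 w2 a \<in> C4pp" and "B0 (normal_quad w1 w2 a) = (w1, w2, a)"
proof -
  obtain p1 p2 p3 p4 where P: "normal_quad w1 w2 a = (p1, p2, p3, p4)" by (metis prod_cases4)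
  note h = normal_quad_pairings[OF V P]
  define E D where "E = exp (\<i> * complex_of_real a)" and "D = - E / w1"
  have a: "a \<in> {-pi/2<..<pi/2}" and ne1: "w1 + w2 - 1 \<noteq> 0" and argc: "Arg (w1 / w2) \<noteq> 2 * a"
    and "Re (w1 * cnj w2 * exp (- \<i> * complex_of_real a)) > 0"
    using V unfolding V4_def by auto
  hence w: "w1 \<noteq> 0" "w2 \<noteq> 0" by auto
  have "E \<noteq> 0" "D \<noteq> 0" using w by (simp_all add: E_def D_def)
  have h21: "herm (lift p2) (lift p1) = 1" and h32: "herm (lift p3) (lift p2) = 1"
    using h(1,2) by (metis complex_cnj_one herm_swap)+
  have "cos a > 0" using a by (auto intro!: cos_gt_zero_pi)
  hence det123: "det3 (lift p1) (lift p2) (lift p3) \<noteq> 0"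
    unfolding det3_lift_eq_0_iff h by (simp add: Re_exp)
  have "D - w2 * D + E = - D * (w1 + w2 - 1)" using w by (simp add: D_def field_simps)
  hence "(D - w2 * D + E) / (2 * complex_of_real (sqrt (cos a))) \<noteq> 0"
    using \<open>D \<noteq> 0\<close> ne1 \<open>cos a > 0\<close> by simp
  hence "Re (w2 * D) < 0" using V4_normal_height[OF V] unfolding E_def[symmetric] D_def[symmetric]
    by (metis neg_0_less_iff_less zero_less_norm_iff zero_less_power)
  moreover have "Re (herm (lift p2) (lift p3) * herm (lift p3) (lift p4) * herm (lift p4) (lift p2))
      = Re (herm (lift p4) (lift p3))"
    using h(2,5) herm_swap[of "lift p3" "lift p4"] by simp
  ultimately have det234: "det3 (lift p2) (lift p3) (lift p4) \<noteq> 0"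
    unfolding det3_lift_eq_0_iff h by (simp add: D_def E_def)
  have "p1 \<noteq> p2" "p2 \<noteq> p3" "p3 \<noteq> p1" "p4 \<noteq> p1" "p4 \<noteq> p2" "p4 \<noteq> p3"
    using h \<open>E \<noteq> 0\<close> w by (simp_all add: E_def flip: herm_lift_eq_0_iff)
  hence "distinct [p1, p2, p3, p4]" by auto
  then interpret C4_config p1 p2 p3 p4 using det123 det234 by unfold_locales
  have cr: "crossratio p1 p2 p3 p4 = w1" "crossratio p1 p3 p2 p4 = w2"
    unfolding crossratio_1 crossratio_2 h h21 h32 using \<open>E \<noteq> 0\<close> w by (simp_all add: E_def)
  have "cartan p1 p2 p3 = a"
    unfolding cartan_eq_Arg h using a by (simp add: Arg_exp)
  thus "B0 (normal_quad w1 w2 a) = (w1, w2, a)" unfolding P B0_def using cr by simp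
  have "\<not> in_stab_orbit p2 p3 p1 p4"
    using Arg_crossratio_quotient_iff argc cr \<open>cartan p1 p2 p3 = a\<close> by simp
  thus "normal_quad w1 w2 a \<in> C4pp" unfolding P C4pp_iff using C4_config_axioms by blast
qed

section \<open>The classification\<close>

lemma PU_rel_iff:
  assumes "P \<in> C4pp" "Q \<in> C4pp"
  shows "(P, Q) \<in> PU_rel \<longleftrightarrow> B0 P = B0 Q"
proof -
  obtain p1 p2 p3 p4 q1 q2 q3 q4 where "P = (p1, p2, p3, p4)" "Q = (q1, q2, q3, q4)"
    by (metis prod_cases4)
  moreover have "C4_config p1 p2 p3 p4" "C4_config q1 q2 q3 q4"
    using assms calculation by (simp_all add: C4pp_iff)
  ultimately show ?thesis using assms PU_equiv_if_B0_eq[of p1 p2 p3 p4 q1 q2 q3 q4]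
    by (auto simp: PU_rel_def PU_equiv_def intro: B0_invariant)
qed

lemma C4pp_invariants:
  assumes "(p1, p2, p3, p4) \<in> C4pp"
  shows "let X1 = crossratio p1 p2 p3 p4; X2 = crossratio p1 p3 p2 p4; A = cartan p1 p2 p3 in
           A \<in> {-pi/2<..<pi/2} \<and>
           (cmod (X1 + X2 - 1))\<^sup>2 = 2 * Re (X1 * cnj X2 * (1 + exp (- 2 * \<i> * complex_of_real A))) \<and>
           X1 + X2 - 1 \<noteq> 0 \<and>
           Re (X1 * cnj X2 * exp (- \<i> * complex_of_real A)) > 0 \<and>
           Arg (X1 / X2) \<noteq> 2 * A"
proof -
  interpret C4_config p1 p2 p3 p4 using assms by (simp add: C4pp_iff)
  show ?thesis
    using cartan_bounds crossratio_norm_identity crossratio_sum_ne_1 Re_crossratio_product_pos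
      Arg_crossratio_quotient_iff assms by (simp add: C4pp_iff Let_def)
qed

lemma B0_image_C4pp: "B0 ` C4pp = V4"
proof
  show "B0 ` C4pp \<subseteq> V4"
    using C4pp_invariants by (force simp: B0_def V4_def Let_def)
  show "V4 \<subseteq> B0 ` C4pp"
    using normal_quad_realises by (metis image_eqI prod_cases3 subsetI)
qed

theorem mainTheorem7:
  shows "(\<forall>p1 p2 p3 p4. (p1, p2, p3, p4) \<in> C4pp \<longrightarrow>
            (let X1 = crossratio p1 p2 p3 p4; X2 = crossratio p1 p3 p2 p4; A = cartan p1 p2 p3 in
              A \<in> {-pi/2<..<pi/2} \<and>
              (cmod (X1 + X2 - 1))\<^sup>2 = 2 * Re (X1 * cnj X2 * (1 + exp (- 2 * \<i> * complex_of_real A))) \<and>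
              X1 + X2 - 1 \<noteq> 0 \<and>
              Re (X1 * cnj X2 * exp (- \<i> * complex_of_real A)) > 0 \<and>
              Arg (X1 / X2) \<noteq> 2 * A))
       \<and> B0 respects PU_rel
       \<and> bij_betw (\<lambda>c. the_elem (B0 ` c)) F4pp V4"
proof -
  have "B0 respects PU_rel"
    unfolding congruent_def using PU_rel_iff by (auto simp: PU_rel_def)
  moreover have "bij_betw (\<lambda>c. the_elem (B0 ` c)) F4pp V4"
    unfolding F4pp_def B0_image_C4pp[symmetric]
    by (rule bij_betw_quotient_the_elem[OF _ PU_rel_iff]) (auto simp: PU_rel_def)
  ultimately show ?thesis using C4pp_invariants by blast
qed

end
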